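(* Let $\beta\in(0,1)$, let $U_1\ge U_2\ge\dots\ge U_K$ be real numbers in $[0,1]$, and let $L\in\mathbb N$ be even. For a sequence $\mathbf A=(A_0,\dots,A_{L-1})\in[K]^L$ let $V(\mathbf A)=\sum_{s=0}^{L-1}\beta^sU_{A_s}$, and for a permutation $\sigma$ of $\{0,\dots,L-1\}$ let $V(\sigma,\mathbf A)=\sum_{s=0}^{L-1}\beta^sU_{A_{\sigma(s)}}$ (the value of the reordered sequence). Then for every $\mathbf A\in[K]^L$, $$\max_{\sigma}V(\sigma,\mathbf A)\le V(\mathbf A)+\frac{(1-\beta^L)^2}{1-\beta},$$ the maximum being over all permutations (reorderings) of $\mathbf A$.
   Context: In the paper, $U_k=u^i(a^i_k,w^{-i})$ is the expected stage utility of action $a^i_k$ of player $i$ against a fixed opponents' mixed profile, with utilities valued in $[0,1]$ and actions indexed so that $U_1\ge\dots\ge U_K$. *)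

theory Defs
  imports "HOL-Analysis.Analysis" "HOL-Combinatorics.Permutations"
begin

definition seq_value :: "real \<Rightarrow> (nat \<Rightarrow> real) \<Rightarrow> nat \<Rightarrow> (nat \<Rightarrow> nat) \<Rightarrow> real" where
  "seq_value \<beta> U L A = (\<Sum>s<L. \<beta> ^ s * U (A s))"

definition perm_value :: "real \<Rightarrow> (nat \<Rightarrow> real) \<Rightarrow> nat \<Rightarrow> (nat \<Rightarrow> nat) \<Rightarrow> (nat \<Rightarrow> nat) \<Rightarrow> real" where
  "perm_value \<beta> U L \<sigma> A = (\<Sum>s<L. \<beta> ^ s * U (A (\<sigma> s)))"

end

theory Submission
  imports Defs
begin

text \<open>Reordering only moves the values \<open>x s = U (A s) \<in> [0, 1]\<close> around, so \<open>\<Sum>s<L. x (\<sigma> s) - x s = 0\<close>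
  and the weights \<open>\<beta>\<^sup>s\<close> may be lowered by the smallest one, \<open>\<beta>\<^sup>L\<close>, without changing the gain
  \<open>V(\<sigma>, A) - V(A)\<close>. Each term of the shifted sum is then at most \<open>\<beta>\<^sup>s - \<beta>\<^sup>L\<close>, and
  \<open>\<Sum>s<L. \<beta>\<^sup>s - \<beta>\<^sup>L \<le> (1 - \<beta>\<^sup>L) (\<Sum>s<L. \<beta>\<^sup>s) = (1 - \<beta>\<^sup>L)\<^sup>2 / (1 - \<beta>)\<close> because \<open>\<Sum>s<L. \<beta>\<^sup>s \<le> L\<close>.\<close>

lemma permutation_gain_le:
  fixes w x :: "'a \<Rightarrow> real"
  assumes "finite S" and "\<sigma> permutes S"
    and x_range: "\<And>s. s \<in> S \<Longrightarrow> 0 \<le> x s \<and> x s \<le> 1"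
    and c_le: "\<And>s. s \<in> S \<Longrightarrow> c \<le> w s"
  shows "(\<Sum>s\<in>S. w s * (x (\<sigma> s) - x s)) \<le> (\<Sum>s\<in>S. w s - c)"
proof -
  have "(\<Sum>s\<in>S. x (\<sigma> s)) = (\<Sum>s\<in>S. x s)"
    using sum.permute[OF \<open>\<sigma> permutes S\<close>, of x] by (simp add: comp_def)
  then have "(\<Sum>s\<in>S. w s * (x (\<sigma> s) - x s)) = (\<Sum>s\<in>S. (w s - c) * (x (\<sigma> s) - x s))"
    by (simp add: algebra_simps sum.distrib sum_subtractf flip: sum_distrib_left)
  also have "\<dots> \<le> (\<Sum>s\<in>S. (w s - c) * 1)"
  proof (rule sum_mono)
    fix s assume "s \<in> S"
    then have "\<sigma> s \<in> S" using permutes_in_image[OF \<open>\<sigma> permutes S\<close>] by simp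
    then show "(w s - c) * (x (\<sigma> s) - x s) \<le> (w s - c) * 1"
      using x_range[of s] x_range[of "\<sigma> s"] c_le[of s] \<open>s \<in> S\<close> by (intro mult_left_mono) auto
  qed
  finally show ?thesis by simp
qed

lemma sum_power_le_card:
  fixes \<beta> :: real
  assumes "0 \<le> \<beta>" and "\<beta> \<le> 1"
  shows "(\<Sum>s<L. \<beta> ^ s) \<le> real L"
proof -
  have "(\<Sum>s<L. \<beta> ^ s) \<le> (\<Sum>s<L. 1)"
    using assms by (intro sum_mono power_le_one) auto
  then show ?thesis by simp
qed

lemma sum_power_minus_last_le:
  fixes \<beta> :: real
  assumes "0 \<le> \<beta>" and "\<beta> < 1"
  shows "(\<Sum>s<L. \<beta> ^ s - \<beta> ^ L) \<le> (1 - \<beta> ^ L)\<^sup>2 / (1 - \<beta>)"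
proof -
  define G where "G = (\<Sum>s<L. \<beta> ^ s)"
  have G_eq: "G = (1 - \<beta> ^ L) / (1 - \<beta>)"
    unfolding G_def using sum_gp_strict[of \<beta> L] assms(2) by simp
  have "(\<Sum>s<L. \<beta> ^ s - \<beta> ^ L) = G - real L * \<beta> ^ L"
    unfolding G_def by (simp add: sum_subtractf)
  also have "\<dots> \<le> G - \<beta> ^ L * G"
    using mult_left_mono[OF sum_power_le_card[of \<beta> L], of "\<beta> ^ L"] assms unfolding G_def
    by (simp add: mult.commute)
  also have "\<dots> = (1 - \<beta> ^ L) * G" by (simp add: algebra_simps)
  also have "\<dots> = (1 - \<beta> ^ L)\<^sup>2 / (1 - \<beta>)"
    unfolding G_eq by (simp add: power2_eq_square)
  finally show ?thesis .
qed

lemma perm_value_le_seq_value: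
  assumes "0 \<le> \<beta>" and "\<beta> < 1"
    and U_range: "\<And>s. s < L \<Longrightarrow> 0 \<le> U (A s) \<and> U (A s) \<le> 1"
    and "\<sigma> permutes {..<L}"
  shows "perm_value \<beta> U L \<sigma> A \<le> seq_value \<beta> U L A + (1 - \<beta> ^ L)\<^sup>2 / (1 - \<beta>)"
proof -
  have "perm_value \<beta> U L \<sigma> A - seq_value \<beta> U L A
      = (\<Sum>s<L. \<beta> ^ s * (U (A (\<sigma> s)) - U (A s)))"
    unfolding perm_value_def seq_value_def by (simp add: sum_subtractf algebra_simps)
  also have "\<dots> \<le> (\<Sum>s<L. \<beta> ^ s - \<beta> ^ L)"
    using assms by (intro permutation_gain_le[where x = "\<lambda>s. U (A s)"] power_decreasing) auto
  also have "\<dots> \<le> (1 - \<beta> ^ L)\<^sup>2 / (1 - \<beta>)"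
    using assms(1,2) by (rule sum_power_minus_last_le)
  finally show ?thesis by simp
qed

theorem mainTheorem12:
  fixes \<beta> :: real and U :: "nat \<Rightarrow> real" and K L :: nat and A :: "nat \<Rightarrow> nat"
  assumes "0 < \<beta>" and "\<beta> < 1"
    and "\<And>k. k \<in> {1..K} \<Longrightarrow> 0 \<le> U k \<and> U k \<le> 1"
    and "\<And>j k. 1 \<le> j \<Longrightarrow> j \<le> k \<Longrightarrow> k \<le> K \<Longrightarrow> U k \<le> U j"
    and "even L"
    and "\<And>s. s < L \<Longrightarrow> A s \<in> {1..K}"
  shows "Max ((\<lambda>\<sigma>. perm_value \<beta> U L \<sigma> A) ` {\<sigma>. \<sigma> permutes {..<L}})
           \<le> seq_value \<beta> U L A + (1 - \<beta> ^ L)\<^sup>2 / (1 - \<beta>)"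
proof -
  have "finite {\<sigma>. \<sigma> permutes {..<L}}" by (rule finite_permutations) simp
  moreover have "{\<sigma>. \<sigma> permutes {..<L}} \<noteq> {}" using permutes_id by blast
  moreover have "\<And>s. s < L \<Longrightarrow> 0 \<le> U (A s) \<and> U (A s) \<le> 1"
    using assms(3,6) by blast
  ultimately show ?thesis
    using assms(1,2) by (subst Max_le_iff) (auto intro: perm_value_le_seq_value)
qed

end
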